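(* Let $C\subseteq\mathbb R^d$ be a full-dimensional pointed cone, let $\Gamma$ be the set of points of $C$ lying outside some (possibly empty) truncation of $C$, let $V$ be a countable subset of $C$, and set $U=V+\Gamma$. Then the boundary $\partial U=\overline U\setminus U^\circ$ has Lebesgue measure zero.
   Context: A cone is a subset of $\mathbb R^d$ closed under nonnegative real linear combinations; full-dimensional means nonempty interior; pointed means closed and there is $\mathbf b$ with $\langle\mathbf u,\mathbf b\rangle>0$ for all nonzero $\mathbf u$ in the cone. For such $\mathbf b$ and real $\alpha\ge0$, $H=\{\mathbf u:\langle\mathbf u,\mathbf b\rangle<\alpha\}$ is a truncating halfspace and $C\cap H$ is a truncation of $C$ (empty when $\alpha=0$); $\Gamma=C\setminus H$. $V+\Gamma$ is the Minkowski sum; $\overline U$ and $U^\circ$ denote closure and interior. *)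

theory Defs
  imports "HOL-Analysis.Analysis"
begin

definition nn_cone :: "'a::euclidean_space set \<Rightarrow> bool" where
  "nn_cone C \<longleftrightarrow> (\<forall>u\<in>C. \<forall>v\<in>C. \<forall>a b::real. a \<ge> 0 \<longrightarrow> b \<ge> 0 \<longrightarrow> a *\<^sub>R u + b *\<^sub>R v \<in> C)"

definition full_dimensional :: "'a::euclidean_space set \<Rightarrow> bool" where
  "full_dimensional C \<longleftrightarrow> interior C \<noteq> {}"

definition pointing_vector :: "'a::euclidean_space set \<Rightarrow> 'a \<Rightarrow> bool" where
  "pointing_vector C b \<longleftrightarrow> (\<forall>u\<in>C. u \<noteq> 0 \<longrightarrow> inner u b > 0)"

definition pointed_cone :: "'a::euclidean_space set \<Rightarrow> bool" where
  "pointed_cone C \<longleftrightarrow> nn_cone C \<and> closed C \<and> (\<exists>b. pointing_vector C b)"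

definition truncating_halfspace :: "'a::euclidean_space set \<Rightarrow> 'a set \<Rightarrow> bool" where
  "truncating_halfspace C H \<longleftrightarrow>
     (\<exists>b (\<alpha>::real). pointing_vector C b \<and> \<alpha> \<ge> 0 \<and> H = {u. inner u b < \<alpha>})"

definition minkowski_sum :: "'a::euclidean_space set \<Rightarrow> 'a set \<Rightarrow> 'a set" where
  "minkowski_sum A B = {a + b | a b. a \<in> A \<and> b \<in> B}"

end

theory Submission
  imports Defs
begin

text \<open>
  Let \<open>e\<close> be an interior point of \<open>C\<close>. The set \<open>U = V + \<Gamma>\<close> is stable under adding
  elements of \<open>C\<close>, so from any point of \<open>closure U\<close> a whole ball around \<open>x + t e\<close>
  (\<open>t > 0\<close>) lies in \<open>U\<close>. Hence every ray \<open>x + t e\<close> meets the frontier at most once,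
  and a bounded set with this property is null: its translates by \<open>(k/N) e\<close>,
  \<open>k < N\<close>, are pairwise disjoint and stay in a fixed ball, so \<open>N\<close> times its measure
  is bounded independently of \<open>N\<close>.
\<close>

lemma translates_along_ray_disjoint:
  fixes K :: "'a::real_vector set"
  assumes ray: "\<And>x t. x \<in> K \<Longrightarrow> t > 0 \<Longrightarrow> x + t *\<^sub>R e \<notin> K"
    and "s < t"
  shows "(+) (s *\<^sub>R e) ` K \<inter> (+) (t *\<^sub>R e) ` K = {}"
proof (rule ccontr)
  assume "(+) (s *\<^sub>R e) ` K \<inter> (+) (t *\<^sub>R e) ` K \<noteq> {}"
  then obtain x y where "x \<in> K" "y \<in> K" "s *\<^sub>R e + x = t *\<^sub>R e + y"
    by auto
  then have "x = y + (t - s) *\<^sub>R e"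
    by (simp add: algebra_simps)
  with ray[OF \<open>y \<in> K\<close>] \<open>x \<in> K\<close> \<open>s < t\<close> show False
    by simp
qed

lemma measure_zero_if_translates_along_ray_disjoint:
  fixes K :: "'a::euclidean_space set"
  assumes K: "K \<in> lmeasurable" "bounded K"
    and ray: "\<And>x t. x \<in> K \<Longrightarrow> t > 0 \<Longrightarrow> x + t *\<^sub>R e \<notin> K"
  shows "measure lebesgue K = 0"
proof -
  obtain R where R: "K \<subseteq> cball 0 R"
    using K(2) by (auto simp: bounded_iff subset_iff)
  define B where "B = measure lebesgue (cball (0::'a) (R + norm e))"
  have packing: "real N * measure lebesgue K \<le> B" if "N > 0" for N :: nat
  proof -
    define T where "T k = (+) ((real k / real N) *\<^sub>R e) ` K" for k
    have T_meas: "T k \<in> lmeasurable" for k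
      unfolding T_def using K(1) by (rule measurable_translation)
    have T_disjoint: "T i \<inter> T j = {}" if "i < j" for i j
      unfolding T_def using that \<open>N > 0\<close>
      by (intro translates_along_ray_disjoint[OF ray] divide_strict_right_mono) auto
    have "pairwise (\<lambda>i j. negligible (T i \<inter> T j)) {..<N}"
      unfolding pairwise_def by (metis Int_commute T_disjoint linorder_neqE_nat negligible_empty)
    then have "measure lebesgue (\<Union>k<N. T k) = (\<Sum>k<N. measure lebesgue (T k))"
      by (intro measure_negligible_finite_Union_image T_meas) auto
    also have "\<dots> = real N * measure lebesgue K"
      by (simp add: T_def measure_translation)
    finally have union_measure: "measure lebesgue (\<Union>k<N. T k) = real N * measure lebesgue K" .
    have "T k \<subseteq> cball 0 (R + norm e)" if "k < N" for k
    proof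
      fix x assume "x \<in> T k"
      then obtain y where "y \<in> K" and x: "x = (real k / real N) *\<^sub>R e + y"
        by (auto simp: T_def)
      have "norm ((real k / real N) *\<^sub>R e) = (real k / real N) * norm e"
        by simp
      also have "\<dots> \<le> norm e"
        using \<open>k < N\<close> by (intro mult_left_le_one_le) auto
      finally have "norm ((real k / real N) *\<^sub>R e) \<le> norm e" .
      moreover have "norm y \<le> R"
        using R \<open>y \<in> K\<close> by auto
      ultimately show "x \<in> cball 0 (R + norm e)"
        using norm_triangle_ineq[of "(real k / real N) *\<^sub>R e" y] by (simp add: x)
    qed
    then have "measure lebesgue (\<Union>k<N. T k) \<le> B"
      unfolding B_def
      by (intro measure_mono_fmeasurable) (use T_meas in auto)
    with union_measure show ?thesis
      by simp
  qed
  show ?thesis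
  proof (rule ccontr)
    assume "measure lebesgue K \<noteq> 0"
    then have "measure lebesgue K > 0"
      using measure_nonneg[of lebesgue K] by linarith
    then obtain N where N: "B < real N * measure lebesgue K"
      using ex_less_of_nat_mult by blast
    have "0 \<le> B"
      unfolding B_def by (rule measure_nonneg)
    with N have "N > 0"
      by (cases "N = 0") auto
    with N packing show False
      by (meson not_le)
  qed
qed

lemma closed_null_if_translates_along_ray_disjoint:
  fixes F :: "'a::euclidean_space set"
  assumes "closed F"
    and ray: "\<And>x t. x \<in> F \<Longrightarrow> t > 0 \<Longrightarrow> x + t *\<^sub>R e \<notin> F"
  shows "F \<in> null_sets lebesgue"
proof -
  have "F = (\<Union>n::nat. F \<inter> cball 0 (real n))"
    using real_arch_simple by (auto simp: dist_norm)
  also have "\<dots> \<in> null_sets lebesgue"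
  proof (rule null_sets_UN)
    fix n :: nat
    have "F \<inter> cball 0 (real n) \<in> lmeasurable"
      using \<open>closed F\<close> by (intro lmeasurable_compact closed_Int_compact) auto
    moreover have "measure lebesgue (F \<inter> cball 0 (real n)) = 0"
      using calculation ray by (intro measure_zero_if_translates_along_ray_disjoint) auto
    ultimately show "F \<inter> cball 0 (real n) \<in> null_sets lebesgue"
      using negligible_iff_measure0 negligible_iff_null_sets by blast
  qed
  finally show ?thesis .
qed

lemma ball_scaleR_subset_cone:
  fixes C :: "'a::real_normed_vector set"
  assumes "cone C" and "ball e r \<subseteq> C" and "t > 0"
  shows "ball (t *\<^sub>R e) (t * r) \<subseteq> C"
proof
  fix z assume "z \<in> ball (t *\<^sub>R e) (t * r)"
  moreover have "t *\<^sub>R e - z = t *\<^sub>R (e - z /\<^sub>R t)"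
    using \<open>t > 0\<close> by (simp add: algebra_simps)
  ultimately have "t * dist e (z /\<^sub>R t) < t * r"
    using \<open>t > 0\<close> by (simp add: dist_norm)
  then have "z /\<^sub>R t \<in> ball e r"
    using \<open>t > 0\<close> by simp
  then have "z /\<^sub>R t \<in> C"
    using \<open>ball e r \<subseteq> C\<close> by blast
  then have "t *\<^sub>R (z /\<^sub>R t) \<in> C"
    using mem_cone[OF \<open>cone C\<close>] \<open>t > 0\<close> less_imp_le by blast
  then show "z \<in> C"
    using \<open>t > 0\<close> by simp
qed

lemma closure_add_interior_cone_subset_interior:
  fixes U C :: "'a::real_normed_vector set"
  assumes up: "\<And>y c. y \<in> U \<Longrightarrow> c \<in> C \<Longrightarrow> y + c \<in> U"
    and "cone C" and "e \<in> interior C"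
    and "x \<in> closure U" and "t > 0"
  shows "x + t *\<^sub>R e \<in> interior U"
proof -
  obtain r where "r > 0" and "ball e r \<subseteq> C"
    using \<open>e \<in> interior C\<close> mem_interior by blast
  then have C_ball: "ball (t *\<^sub>R e) (t * r) \<subseteq> C"
    using ball_scaleR_subset_cone \<open>cone C\<close> \<open>t > 0\<close> by blast
  have "t * r / 2 > 0"
    using \<open>r > 0\<close> \<open>t > 0\<close> by simp
  then obtain y where "y \<in> U" and y: "dist y x < t * r / 2"
    using \<open>x \<in> closure U\<close> closure_approachable by blast
  have "ball (x + t *\<^sub>R e) (t * r / 2) \<subseteq> U"
  proof
    fix z assume "z \<in> ball (x + t *\<^sub>R e) (t * r / 2)"
    then have "norm (x + t *\<^sub>R e - z) < t * r / 2"
      by (simp add: dist_norm)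
    moreover have "norm (y - x) < t * r / 2"
      using y by (simp add: dist_norm)
    moreover have "norm (t *\<^sub>R e - (z - y)) \<le> norm (x + t *\<^sub>R e - z) + norm (y - x)"
      using norm_triangle_ineq[of "x + t *\<^sub>R e - z" "y - x"] by (simp add: algebra_simps)
    ultimately have "z - y \<in> ball (t *\<^sub>R e) (t * r)"
      by (simp add: dist_norm)
    then have "y + (z - y) \<in> U"
      using up \<open>y \<in> U\<close> C_ball by blast
    then show "z \<in> U"
      by simp
  qed
  then show ?thesis
    using \<open>t * r / 2 > 0\<close> mem_interior by blast
qed

lemma frontier_null_if_stable_under_cone:
  fixes U C :: "'a::euclidean_space set"
  assumes "cone C" and "interior C \<noteq> {}"
    and up: "\<And>y c. y \<in> U \<Longrightarrow> c \<in> C \<Longrightarrow> y + c \<in> U"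
  shows "frontier U \<in> null_sets lebesgue"
proof -
  obtain e where "e \<in> interior C"
    using \<open>interior C \<noteq> {}\<close> by blast
  show ?thesis
  proof (rule closed_null_if_translates_along_ray_disjoint[where e = e])
    fix x t assume "x \<in> frontier U" "(t::real) > 0"
    then have "x + t *\<^sub>R e \<in> interior U"
      using closure_add_interior_cone_subset_interior[OF up \<open>cone C\<close> \<open>e \<in> interior C\<close>]
      by (simp add: frontier_def)
    then show "x + t *\<^sub>R e \<notin> frontier U"
      by (simp add: frontier_def)
  qed simp
qed

lemma nn_cone_iff_convex_cone: "nn_cone C \<longleftrightarrow> convex C \<and> cone C"
proof -
  have "nn_cone C \<longleftrightarrow> (\<forall>x\<in>C. \<forall>y\<in>C. x + y \<in> C) \<and> (\<forall>x\<in>C. \<forall>c\<ge>0. c *\<^sub>R x \<in> C)"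
    unfolding nn_cone_def
  proof (intro iffI conjI ballI allI impI; (elim conjE)?)
    fix x y assume "\<forall>u\<in>C. \<forall>v\<in>C. \<forall>a b::real. a \<ge> 0 \<longrightarrow> b \<ge> 0 \<longrightarrow> a *\<^sub>R u + b *\<^sub>R v \<in> C"
      and "x \<in> C" "y \<in> C"
    then show "x + y \<in> C"
      by (metis scaleR_one zero_le_one)
  next
    fix x and c :: real
    assume "\<forall>u\<in>C. \<forall>v\<in>C. \<forall>a b::real. a \<ge> 0 \<longrightarrow> b \<ge> 0 \<longrightarrow> a *\<^sub>R u + b *\<^sub>R v \<in> C"
      and "x \<in> C" "c \<ge> 0"
    then show "c *\<^sub>R x \<in> C"
      by (metis add.right_neutral order_refl scaleR_zero_left)
  next
    fix u v and a b :: real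
    assume "\<forall>x\<in>C. \<forall>y\<in>C. x + y \<in> C" "\<forall>x\<in>C. \<forall>c\<ge>0. c *\<^sub>R x \<in> C"
      and "u \<in> C" "v \<in> C" "a \<ge> 0" "b \<ge> 0"
    then show "a *\<^sub>R u + b *\<^sub>R v \<in> C"
      by blast
  qed
  then show ?thesis
    by (simp add: convex_cone)
qed

lemma minkowski_sum_diff_halfspace_add_cone:
  assumes "convex C" "cone C" "pointing_vector C b"
    and "y \<in> minkowski_sum V (C - {u. inner u b < \<alpha>})" and "c \<in> C"
  shows "y + c \<in> minkowski_sum V (C - {u. inner u b < \<alpha>})"
proof -
  obtain v g where "v \<in> V" "g \<in> C" "inner g b \<ge> \<alpha>" and y: "y = v + g"
    using \<open>y \<in> minkowski_sum V _\<close> by (auto simp: minkowski_sum_def)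
  have "inner c b \<ge> 0"
    using \<open>pointing_vector C b\<close> \<open>c \<in> C\<close>
    by (cases "c = 0") (auto simp: pointing_vector_def less_imp_le)
  moreover have "g + c \<in> C"
    using \<open>convex C\<close> \<open>cone C\<close> \<open>g \<in> C\<close> \<open>c \<in> C\<close> convex_cone by blast
  ultimately have "g + c \<in> C - {u. inner u b < \<alpha>}"
    using \<open>inner g b \<ge> \<alpha>\<close> by (simp add: inner_add_left)
  moreover have "y + c = v + (g + c)"
    by (simp add: y algebra_simps)
  ultimately show ?thesis
    using \<open>v \<in> V\<close> unfolding minkowski_sum_def by blast
qed

theorem mainTheorem12:
  fixes C V H :: "'a::euclidean_space set"
  assumes "nn_cone C" and "full_dimensional C" and "pointed_cone C"
    and "truncating_halfspace C H"
    and "countable V" and "V \<subseteq> C"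
  shows "closure (minkowski_sum V (C - H)) - interior (minkowski_sum V (C - H))
           \<in> null_sets lebesgue"
proof -
  obtain b \<alpha> where "pointing_vector C b" and H: "H = {u. inner u b < \<alpha>}"
    using \<open>truncating_halfspace C H\<close> unfolding truncating_halfspace_def by blast
  have "convex C" "cone C"
    using \<open>nn_cone C\<close> by (simp_all add: nn_cone_iff_convex_cone)
  moreover have "interior C \<noteq> {}"
    using \<open>full_dimensional C\<close> by (simp add: full_dimensional_def)
  ultimately have "frontier (minkowski_sum V (C - H)) \<in> null_sets lebesgue"
    using minkowski_sum_diff_halfspace_add_cone[OF _ _ \<open>pointing_vector C b\<close>]
    by (intro frontier_null_if_stable_under_cone[where C = C]) (auto simp: H)
  then show ?thesis
    by (simp add: frontier_def)
qed

end
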